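(* Let $P\in\mathcal{P}$, let $s$ be in the tangent set of $\mathcal{P}$ at $P$, and let $\{P_\epsilon:\epsilon\in[0,\delta)\}\in\mathscr{P}(P,\mathcal{P},s)$ satisfy $P_\epsilon\ll P$ and $\|dP_\epsilon/dP-1-\epsilon s\|_{L^2(P)}=o(\epsilon)$. If $\nu$ is pathwise differentiable at $P$, then there is a function $g:(0,\delta)\to[0,\infty)$ with $g(\epsilon)/\epsilon\to0$ as $\epsilon\to0$, not depending on $\beta$, such that for every $\beta\in\ell^2\cap[0,1]^{\mathbb{N}}$ and $\epsilon\in(0,\delta)$, $$\Big\|\nu(P)-\nu(P_\epsilon)+P_\epsilon\phi_P^\beta-\sum_{k=1}^\infty(1-\beta_k)\langle\nu(P)-\nu(P_\epsilon),h_k\rangle_{\mathcal{H}}h_k\Big\|_{\mathcal{H}}\le\big(1+\|\phi_P^\beta\|_{L^2(P;\mathcal{H})}\big)g(\epsilon).$$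
   Context: $(\mathcal{Z},\mathbf{B})$ is a Polish space, $\mathcal{P}$ a model of distributions dominated by a $\sigma$-finite measure $\lambda$, $\mathcal{H}$ a real separable Hilbert space with orthonormal basis $(h_k)_{k\ge1}$ (padded with zeros if finite-dimensional), $\nu:\mathcal{P}\to\mathcal{H}$. For $s\in L^2(P)$, $\mathscr{P}(P,\mathcal{P},s)$ is the set of submodels $\{P_\epsilon:\epsilon\in[0,\delta)\}\subset\mathcal{P}$ with $\|p_\epsilon^{1/2}-p^{1/2}-\epsilon sp^{1/2}/2\|_{L^2(\lambda)}=o(\epsilon)$; tangent set $\{s:\mathscr{P}(P,\mathcal{P},s)\ne\emptyset\}$, tangent space $\dot{\mathcal{P}}_P$ its closed linear span. $\nu$ is pathwise differentiable at $P$ if there is a continuous linear $\dot{\nu}_P:\dot{\mathcal{P}}_P\to\mathcal{H}$ with $\|\nu(P_\epsilon)-\nu(P)-\epsilon\dot{\nu}_P(s)\|_{\mathcal{H}}=o(\epsilon)$ for every tangent-set $s$ and every submodel in $\mathscr{P}(P,\mathcal{P},s)$; $\dot{\nu}_P^*$ is its adjoint. $\phi_P^\beta(z)=\sum_k\beta_k\dot{\nu}_P^*(h_k)(z)h_k$; $P_\epsilon\phi_P^\beta=\int\phi_P^\beta\,dP_\epsilon$ (Bochner integral). $L^2(P;\mathcal{H})$-norm: $\|f\|^2=\int\|f\|_{\mathcal{H}}^2dP$. *)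

theory Defs
  imports "HOL-Probability.Probability"
begin

definition dominated_model :: "'z::polish_space measure \<Rightarrow> 'z measure set \<Rightarrow> bool" where
  "dominated_model lam Ps \<longleftrightarrow> sigma_finite_measure lam \<and> sets lam = sets borel \<and>
     (\<forall>Q\<in>Ps. prob_space Q \<and> sets Q = sets borel \<and> absolutely_continuous lam Q)"

text \<open>Orthonormal basis (h k) of a separable Hilbert space, padded with zeros if finite-dimensional.\<close>
definition padded_onb :: "(nat \<Rightarrow> 'h::{real_inner,complete_space}) \<Rightarrow> bool" where
  "padded_onb h \<longleftrightarrow> (\<forall>j k. j \<noteq> k \<longrightarrow> inner (h j) (h k) = 0) \<and>
     (\<forall>k. h k = 0 \<or> norm (h k) = 1) \<and> (\<forall>k. h k = 0 \<longrightarrow> h (Suc k) = 0) \<and>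
     closure (span (range h)) = UNIV"

definition L2 :: "'z measure \<Rightarrow> ('z \<Rightarrow> real) \<Rightarrow> bool" where
  "L2 M f \<longleftrightarrow> f \<in> borel_measurable M \<and> integrable M (\<lambda>z. (f z)\<^sup>2)"

definition L2norm :: "'z measure \<Rightarrow> ('z \<Rightarrow> real) \<Rightarrow> real" where
  "L2norm M f = sqrt (\<integral>z. (f z)\<^sup>2 \<partial>M)"

definition L2normH :: "'z measure \<Rightarrow> ('z \<Rightarrow> 'h::real_normed_vector) \<Rightarrow> real" where
  "L2normH M f = sqrt (\<integral>z. (norm (f z))\<^sup>2 \<partial>M)"

definition dens :: "'z measure \<Rightarrow> 'z measure \<Rightarrow> 'z \<Rightarrow> real" where
  "dens lam Q z = enn2real (RN_deriv lam Q z)"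

definition submodel :: "'z measure \<Rightarrow> 'z measure set \<Rightarrow> 'z measure \<Rightarrow> ('z \<Rightarrow> real)
    \<Rightarrow> real \<Rightarrow> (real \<Rightarrow> 'z measure) \<Rightarrow> bool" where
  "submodel lam Ps P s \<delta> Pe \<longleftrightarrow> \<delta> > 0 \<and> (\<forall>\<epsilon>\<in>{0..<\<delta>}. Pe \<epsilon> \<in> Ps) \<and>
     ((\<lambda>\<epsilon>. L2norm lam (\<lambda>z. sqrt (dens lam (Pe \<epsilon>) z) - sqrt (dens lam P z)
                 - \<epsilon> * s z * sqrt (dens lam P z) / 2) / \<epsilon>) \<longlongrightarrow> 0) (at_right 0)"

definition tangent_set :: "'z measure \<Rightarrow> 'z measure set \<Rightarrow> 'z measure \<Rightarrow> ('z \<Rightarrow> real) set" where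
  "tangent_set lam Ps P = {s. L2 P s \<and> (\<exists>\<delta> Pe. submodel lam Ps P s \<delta> Pe)}"

definition lin_comb :: "('z \<Rightarrow> real) set \<Rightarrow> ('z \<Rightarrow> real) set" where
  "lin_comb TT = {(\<lambda>z. \<Sum>i<n. c i * t i z) | (n::nat) c t. \<forall>i<n. t i \<in> TT}"

definition tangent_space :: "'z measure \<Rightarrow> 'z measure set \<Rightarrow> 'z measure \<Rightarrow> ('z \<Rightarrow> real) set" where
  "tangent_space lam Ps P = {f. L2 P f \<and>
     (\<forall>e>0. \<exists>g\<in>lin_comb (tangent_set lam Ps P). L2norm P (\<lambda>z. f z - g z) < e)}"

definition pathwise_deriv :: "'z measure \<Rightarrow> 'z measure set \<Rightarrow> ('z measure \<Rightarrow> 'h::real_normed_vector)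
    \<Rightarrow> 'z measure \<Rightarrow> (('z \<Rightarrow> real) \<Rightarrow> 'h) \<Rightarrow> bool" where
  "pathwise_deriv lam Ps \<nu> P D \<longleftrightarrow>
     (\<forall>f\<in>tangent_space lam Ps P. \<forall>g\<in>tangent_space lam Ps P. \<forall>a b.
         D (\<lambda>z. a * f z + b * g z) = a *\<^sub>R D f + b *\<^sub>R D g) \<and>
     (\<exists>C. \<forall>f\<in>tangent_space lam Ps P. norm (D f) \<le> C * L2norm P f) \<and>
     (\<forall>s\<in>tangent_set lam Ps P. \<forall>\<delta> Pe. submodel lam Ps P s \<delta> Pe \<longrightarrow>
         ((\<lambda>\<epsilon>. norm (\<nu> (Pe \<epsilon>) - \<nu> P - \<epsilon> *\<^sub>R D s) / \<epsilon>) \<longlongrightarrow> 0) (at_right 0))"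

definition pathwise_differentiable where
  "pathwise_differentiable lam Ps \<nu> P \<longleftrightarrow> (\<exists>D. pathwise_deriv lam Ps \<nu> P D)"

definition adjoint_of :: "'z measure \<Rightarrow> 'z measure set \<Rightarrow> 'z measure \<Rightarrow> (('z \<Rightarrow> real) \<Rightarrow> 'h::real_inner)
    \<Rightarrow> ('h \<Rightarrow> 'z \<Rightarrow> real) \<Rightarrow> bool" where
  "adjoint_of lam Ps P D A \<longleftrightarrow> (\<forall>x. A x \<in> tangent_space lam Ps P \<and>
     (\<forall>f\<in>tangent_space lam Ps P. inner (D f) x = (\<integral>z. f z * A x z \<partial>P)))"

text \<open>phi_P^beta(z) = sum_k beta_k (A h_k)(z) h_k, taken as 0 where the series diverges
  (a P-null set).\<close>
definition phi :: "('h \<Rightarrow> 'z \<Rightarrow> real) \<Rightarrow> (nat \<Rightarrow> 'h::real_normed_vector) \<Rightarrow> (nat \<Rightarrow> real) \<Rightarrow> 'z \<Rightarrow> 'h" where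
  "phi A h \<beta> z = (if summable (\<lambda>k. (\<beta> k * A (h k) z) *\<^sub>R h k)
                   then (\<Sum>k. (\<beta> k * A (h k) z) *\<^sub>R h k) else 0)"

end

theory Submission
  imports Defs
begin

text \<open>Write Delta = \<nu> P - \<nu> (Pe \<epsilon>), rho = d(Pe \<epsilon>)/dP and r = rho - 1 - \<epsilon> s. Elements of
  the tangent space have P-mean zero (the square roots of the densities of a submodel stay on the
  unit sphere of L2(lam), so the score is orthogonal to sqrt p), and the integral of s * A x over P
  is <D s, x> by adjointness. Since rho - r = 1 + \<epsilon> s, the k-th coefficient of the integral of
  phi over Pe \<epsilon>, minus that of R = the integral of r phi over P, is therefore \<epsilon> \<beta>_k <D s, h_k>;
  so the vector inside the norm, minus R, has coefficients \<beta>_k <Delta + \<epsilon> D s, h_k>. As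
  0 \<le> \<beta>_k \<le> 1, Parseval bounds its norm by that of Delta + \<epsilon> D s, which is o(\<epsilon>) by pathwise
  differentiability, and Cauchy-Schwarz bounds the norm of R by the L2(P) norm of r, which is o(\<epsilon>)
  by hypothesis, times the L2(P;H) norm of phi.\<close>

section \<open>Orthogonal series in Hilbert spaces\<close>

lemma padded_onb_orthogonal: "padded_onb h \<Longrightarrow> j \<noteq> k \<Longrightarrow> inner (h j) (h k) = 0"
  by (simp add: padded_onb_def)

lemma padded_onb_norm_le_1: "padded_onb h \<Longrightarrow> norm (h k) \<le> 1"
  unfolding padded_onb_def by (cases "h k = 0") auto

lemma padded_onb_inner_mult_inner_self: "padded_onb h \<Longrightarrow> inner x (h k) * inner (h k) (h k) = inner x (h k)"
  unfolding padded_onb_def by (cases "h k = 0") (auto simp: norm_eq_1)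

lemma padded_onb_coefficient_sq:
  "padded_onb h \<Longrightarrow> (inner x (h k))\<^sup>2 * (norm (h k))\<^sup>2 = (inner x (h k))\<^sup>2"
  unfolding padded_onb_def by (cases "h k = 0") auto

lemma norm_sum_orthogonal_sq:
  assumes "\<And>j k. j \<noteq> k \<Longrightarrow> inner (h j) (h k) = 0"
  shows "(norm (\<Sum>k\<in>F. a k *\<^sub>R h k))\<^sup>2 = (\<Sum>k\<in>F. (a k)\<^sup>2 * (norm (h k))\<^sup>2)"
proof (cases "finite F")
  case True
  then show ?thesis
    using norm_sum_Pythagorean[of F "\<lambda>k. a k *\<^sub>R h k"] assms
    by (auto simp: pairwise_def orthogonal_def power_mult_distrib)
qed simp

lemma summable_orthogonal_series:
  fixes h :: "nat \<Rightarrow> 'h::{real_inner,complete_space}"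
  assumes orth: "\<And>j k. j \<noteq> k \<Longrightarrow> inner (h j) (h k) = 0"
    and summable: "summable (\<lambda>k. (a k)\<^sup>2 * (norm (h k))\<^sup>2)"
  shows "summable (\<lambda>k. a k *\<^sub>R h k)"
proof -
  define S where "S n = (\<Sum>k<n. a k *\<^sub>R h k)" for n
  define T where "T n = (\<Sum>k<n. (a k)\<^sup>2 * (norm (h k))\<^sup>2)" for n
  have dist_ST: "dist (S m) (S n) = sqrt (dist (T m) (T n))" for m n
  proof -
    have "dist (S m) (S n) = sqrt (dist (T m) (T n))" if "n \<le> m" for m n
    proof -
      have "S m - S n = (\<Sum>k\<in>{n..<m}. a k *\<^sub>R h k)" "T m - T n = (\<Sum>k\<in>{n..<m}. (a k)\<^sup>2 * (norm (h k))\<^sup>2)"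
        unfolding S_def T_def using that by (simp_all add: sum_diff flip: lessThan_minus_lessThan)
      moreover have "0 \<le> T m - T n" using \<open>T m - T n = _\<close> by (simp add: sum_nonneg)
      ultimately show ?thesis
        by (simp add: dist_norm flip: norm_sum_orthogonal_sq[OF orth])
    qed
    then show ?thesis by (metis dist_commute nle_le)
  qed
  have "Cauchy T" using summable unfolding T_def by (simp add: Cauchy_convergent_iff summable_iff_convergent)
  have "Cauchy S"
  proof (rule metric_CauchyI)
    fix e :: real
    assume "0 < e"
    then obtain M where "\<forall>m\<ge>M. \<forall>n\<ge>M. dist (T m) (T n) < e\<^sup>2"
      using metric_CauchyD[OF \<open>Cauchy T\<close>, of "e\<^sup>2"] by auto
    then show "\<exists>M. \<forall>m\<ge>M. \<forall>n\<ge>M. dist (S m) (S n) < e"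
      using \<open>0 < e\<close> by (metis dist_ST real_sqrt_less_mono real_sqrt_abs abs_of_pos)
  qed
  then show ?thesis unfolding S_def by (simp add: Cauchy_convergent_iff summable_iff_convergent)
qed

lemma sums_norm_sq_orthogonal_series:
  fixes h :: "nat \<Rightarrow> 'h::{real_inner,complete_space}"
  assumes orth: "\<And>j k. j \<noteq> k \<Longrightarrow> inner (h j) (h k) = 0"
    and summable: "summable (\<lambda>k. a k *\<^sub>R h k)"
  shows "(\<lambda>k. (a k)\<^sup>2 * (norm (h k))\<^sup>2) sums (norm (\<Sum>k. a k *\<^sub>R h k))\<^sup>2"
proof -
  have "(\<lambda>n. (norm (\<Sum>k<n. a k *\<^sub>R h k))\<^sup>2) \<longlonglongrightarrow> (norm (\<Sum>k. a k *\<^sub>R h k))\<^sup>2"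
    using summable by (intro tendsto_intros summable_LIMSEQ)
  then show ?thesis by (simp add: sums_def norm_sum_orthogonal_sq[OF orth])
qed

lemma summable_orthogonal_series_iff:
  fixes h :: "nat \<Rightarrow> 'h::{real_inner,complete_space}"
  assumes orth: "\<And>j k. j \<noteq> k \<Longrightarrow> inner (h j) (h k) = 0"
  shows "summable (\<lambda>k. a k *\<^sub>R h k) \<longleftrightarrow> summable (\<lambda>k. (a k)\<^sup>2 * (norm (h k))\<^sup>2)"
proof
  assume "summable (\<lambda>k. a k *\<^sub>R h k)"
  with orth show "summable (\<lambda>k. (a k)\<^sup>2 * (norm (h k))\<^sup>2)"
    by (intro sums_summable[OF sums_norm_sq_orthogonal_series])
qed (rule summable_orthogonal_series[OF orth])

lemma inner_suminf_orthogonal: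
  fixes h :: "nat \<Rightarrow> 'h::{real_inner,complete_space}"
  assumes orth: "\<And>j k. j \<noteq> k \<Longrightarrow> inner (h j) (h k) = 0"
    and summable: "summable (\<lambda>k. a k *\<^sub>R h k)"
  shows "inner (\<Sum>k. a k *\<^sub>R h k) (h j) = a j * inner (h j) (h j)"
proof -
  have "inner (\<Sum>k. a k *\<^sub>R h k) (h j) = (\<Sum>k. inner (a k *\<^sub>R h k) (h j))"
    by (rule bounded_linear.suminf[OF bounded_linear_inner_left summable])
  also have "\<dots> = (\<Sum>k. if k = j then a j * inner (h j) (h j) else 0)"
    using orth by (intro suminf_cong) auto
  finally show ?thesis using sums_single[of j "\<lambda>_. a j * inner (h j) (h j)"] by (simp add: sums_iff)
qed

lemma bessel_inequality:
  assumes "padded_onb h"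
  shows "(\<Sum>k<n. (inner x (h k))\<^sup>2) \<le> (norm x)\<^sup>2"
proof -
  define p where "p = (\<Sum>k<n. inner x (h k) *\<^sub>R h k)"
  note orth = padded_onb_orthogonal[OF assms]
  have "inner x p = (\<Sum>k<n. (inner x (h k))\<^sup>2)"
    unfolding p_def by (simp add: inner_sum_right power2_eq_square)
  moreover have "(norm p)\<^sup>2 = (\<Sum>k<n. (inner x (h k))\<^sup>2)"
    unfolding p_def by (simp add: norm_sum_orthogonal_sq[OF orth] padded_onb_coefficient_sq[OF assms])
  moreover have "0 \<le> (norm (x - p))\<^sup>2" by simp
  then have "0 \<le> (norm x)\<^sup>2 - 2 * inner x p + (norm p)\<^sup>2"
    by (simp add: power2_norm_eq_inner inner_diff inner_commute)
  ultimately show ?thesis by simp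
qed

lemma summable_padded_onb_series_dominated:
  fixes h :: "nat \<Rightarrow> 'h::{real_inner,complete_space}"
  assumes basis: "padded_onb h" and le: "\<And>k. \<bar>a k\<bar> \<le> \<bar>inner x (h k)\<bar>"
  shows "summable (\<lambda>k. a k *\<^sub>R h k)"
proof (rule summable_orthogonal_series)
  show "inner (h j) (h k) = 0" if "j \<noteq> k" for j k using that by (rule padded_onb_orthogonal[OF basis])
  have "(a k)\<^sup>2 * (norm (h k))\<^sup>2 \<le> (inner x (h k))\<^sup>2" for k
  proof -
    have "(norm (h k))\<^sup>2 \<le> 1" using padded_onb_norm_le_1[OF basis] by (simp add: power_le_one)
    then have "(a k)\<^sup>2 * (norm (h k))\<^sup>2 \<le> (a k)\<^sup>2" by (simp add: mult_left_le)
    also have "\<dots> \<le> (inner x (h k))\<^sup>2" using le by (simp add: abs_le_square_iff)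
    finally show ?thesis .
  qed
  then show "summable (\<lambda>k. (a k)\<^sup>2 * (norm (h k))\<^sup>2)"
    by (intro summableI_nonneg_bounded[where x="(norm x)\<^sup>2"] order_trans[OF sum_mono bessel_inequality[OF basis]]) auto
qed

lemma padded_onb_expansion:
  fixes h :: "nat \<Rightarrow> 'h::{real_inner,complete_space}"
  assumes basis: "padded_onb h"
  shows "(\<Sum>k. inner x (h k) *\<^sub>R h k) = x"
proof -
  note orth = padded_onb_orthogonal[OF basis]
  have summable: "summable (\<lambda>k. inner x (h k) *\<^sub>R h k)"
    by (rule summable_padded_onb_series_dominated[OF basis, where x=x]) simp
  define w where "w = x - (\<Sum>k. inner x (h k) *\<^sub>R h k)"
  have "inner w (h j) = 0" for j
    unfolding w_def inner_diff_left
    by (simp add: inner_suminf_orthogonal[OF orth summable] padded_onb_inner_mult_inner_self[OF basis])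
  then have "range h \<subseteq> {v. inner w v = 0}" by auto
  then have "span (range h) \<subseteq> {v. inner w v = 0}"
    by (rule span_minimal) (auto simp: subspace_def inner_add_right)
  then have "closure (span (range h)) \<subseteq> {v. inner w v = 0}"
    by (rule closure_minimal) (intro closed_Collect_eq continuous_intros)
  then have "inner w w = 0" using basis unfolding padded_onb_def by blast
  then show ?thesis unfolding w_def by simp
qed

lemma padded_onb_parseval:
  fixes h :: "nat \<Rightarrow> 'h::{real_inner,complete_space}"
  assumes basis: "padded_onb h"
  shows "(\<lambda>k. (inner x (h k))\<^sup>2) sums (norm x)\<^sup>2"
proof -
  note orth = padded_onb_orthogonal[OF basis]
  have summable: "summable (\<lambda>k. inner x (h k) *\<^sub>R h k)"
    by (rule summable_padded_onb_series_dominated[OF basis, where x=x]) simp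
  have "(\<lambda>k. (inner x (h k))\<^sup>2 * (norm (h k))\<^sup>2) sums (norm (\<Sum>k. inner x (h k) *\<^sub>R h k))\<^sup>2"
    by (rule sums_norm_sq_orthogonal_series[OF orth summable])
  then show ?thesis
    unfolding padded_onb_expansion[OF basis] padded_onb_coefficient_sq[OF basis] .
qed

lemma padded_onb_norm_le_by_coefficients:
  fixes h :: "nat \<Rightarrow> 'h::{real_inner,complete_space}"
  assumes basis: "padded_onb h" and le: "\<And>k. \<bar>inner u (h k)\<bar> \<le> \<bar>inner w (h k)\<bar>"
  shows "norm u \<le> norm w"
proof -
  have "(inner u (h k))\<^sup>2 \<le> (inner w (h k))\<^sup>2" for k
    using le[of k] by (simp add: abs_le_square_iff)
  then have "(norm u)\<^sup>2 \<le> (norm w)\<^sup>2"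
    using padded_onb_parseval[OF basis, of u] padded_onb_parseval[OF basis, of w] by (rule sums_le)
  then show ?thesis by (rule power2_le_imp_le) simp
qed

lemma summable_padded_onb_series:
  fixes h :: "nat \<Rightarrow> 'h::{real_inner,complete_space}"
  assumes basis: "padded_onb h" and summable: "summable (\<lambda>k. (c k)\<^sup>2)"
  shows "summable (\<lambda>k. c k *\<^sub>R h k)"
proof (rule summable_orthogonal_series)
  show "inner (h j) (h k) = 0" if "j \<noteq> k" for j k using that by (rule padded_onb_orthogonal[OF basis])
  have "(c k)\<^sup>2 * (norm (h k))\<^sup>2 \<le> (c k)\<^sup>2" for k
    using padded_onb_norm_le_1[OF basis, of k] by (simp add: mult_left_le power_le_one)
  then show "summable (\<lambda>k. (c k)\<^sup>2 * (norm (h k))\<^sup>2)"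
    by (intro summableI_nonneg_bounded[where x="\<Sum>k. (c k)\<^sup>2"] order_trans[OF sum_mono sum_le_suminf[OF summable]]) auto
qed

lemma inner_padded_onb_series:
  fixes h :: "nat \<Rightarrow> 'h::{real_inner,complete_space}"
  assumes basis: "padded_onb h" and \<gamma>: "\<And>k. \<bar>\<gamma> k\<bar> \<le> 1"
  shows "inner (\<Sum>k. (\<gamma> k * inner x (h k)) *\<^sub>R h k) (h j) = \<gamma> j * inner x (h j)"
proof -
  note orth = padded_onb_orthogonal[OF basis]
  have "summable (\<lambda>k. (\<gamma> k * inner x (h k)) *\<^sub>R h k)"
    using \<gamma> by (intro summable_padded_onb_series_dominated[OF basis, of _ x]) (simp add: abs_mult mult_left_le_one_le)
  then have "inner (\<Sum>k. (\<gamma> k * inner x (h k)) *\<^sub>R h k) (h j) = \<gamma> j * inner x (h j) * inner (h j) (h j)"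
    using inner_suminf_orthogonal[where h=h, OF orth] by simp
  then show ?thesis by (simp only: mult.assoc padded_onb_inner_mult_inner_self[OF basis])
qed

section \<open>Square-integrable functions\<close>

lemma L2_add:
  assumes f: "L2 M f" and g: "L2 M g"
  shows "L2 M (\<lambda>x. f x + g x)"
proof -
  have [measurable]: "f \<in> borel_measurable M" "g \<in> borel_measurable M"
    using f g by (simp_all add: L2_def)
  have "(f x + g x)\<^sup>2 \<le> 2 * (f x)\<^sup>2 + 2 * (g x)\<^sup>2" for x
    using sum_squares_bound[of "f x" "g x"] by (simp add: power2_eq_square algebra_simps)
  then have "AE x in M. norm ((f x + g x)\<^sup>2) \<le> norm (2 * (f x)\<^sup>2 + 2 * (g x)\<^sup>2)"
    by (intro AE_I2) simp
  moreover have "integrable M (\<lambda>x. 2 * (f x)\<^sup>2 + 2 * (g x)\<^sup>2)"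
    using f g by (simp add: L2_def)
  ultimately have "integrable M (\<lambda>x. (f x + g x)\<^sup>2)"
    by (rule Bochner_Integration.integrable_bound[rotated 2]) measurable
  then show ?thesis by (simp add: L2_def)
qed

lemma L2_scale: "L2 M f \<Longrightarrow> L2 M (\<lambda>x. c * f x)"
  by (simp add: L2_def power_mult_distrib borel_measurable_times)

lemma L2_diff: "L2 M f \<Longrightarrow> L2 M g \<Longrightarrow> L2 M (\<lambda>x. f x - g x)"
  using L2_add[of M f "\<lambda>x. (- 1) * g x"] L2_scale[of M g "- 1"] by simp

lemma L2_const: "finite_measure M \<Longrightarrow> L2 M (\<lambda>x. c)"
  by (simp add: L2_def finite_measure.integrable_const)

lemma L2_sum: "(\<And>i. i \<in> I \<Longrightarrow> L2 M (f i)) \<Longrightarrow> L2 M (\<lambda>x. \<Sum>i\<in>I. f i x)"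
proof (induction I rule: infinite_finite_induct)
  case (insert i I)
  then have "L2 M (\<lambda>x. f i x + (\<Sum>i\<in>I. f i x))" by (intro L2_add) auto
  with insert.hyps show ?case by simp
qed (simp_all add: L2_def)

lemma L2_integrable: "finite_measure M \<Longrightarrow> L2 M f \<Longrightarrow> integrable M f"
  unfolding L2_def by (metis finite_measure.square_integrable_imp_integrable)

lemma L2norm_nonneg: "0 \<le> L2norm M f"
  by (simp add: L2norm_def)

lemma L2_cauchy_schwarz:
  assumes f: "L2 M f" and g: "L2 M g"
  shows "integrable M (\<lambda>x. f x * g x)"
    and "(\<integral>x. \<bar>f x * g x\<bar> \<partial>M) \<le> L2norm M f * L2norm M g"
proof -
  have [measurable]: "f \<in> borel_measurable M" "g \<in> borel_measurable M"
    using f g by (simp_all add: L2_def)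
  have nn_sq: "(\<integral>\<^sup>+x. ennreal \<bar>u x\<bar> ^ 2 \<partial>M) = ennreal (\<integral>x. (u x)\<^sup>2 \<partial>M)" if "L2 M u" for u
    using that by (simp add: L2_def ennreal_power nn_integral_eq_integral)
  have "(\<integral>\<^sup>+x. ennreal \<bar>f x\<bar> * ennreal \<bar>g x\<bar> \<partial>M)\<^sup>2
      \<le> ennreal (\<integral>x. (f x)\<^sup>2 \<partial>M) * ennreal (\<integral>x. (g x)\<^sup>2 \<partial>M)"
    using Cauchy_Schwarz_nn_integral[of "\<lambda>x. ennreal \<bar>f x\<bar>" M "\<lambda>x. ennreal \<bar>g x\<bar>"]
    by (simp add: nn_sq[OF f] nn_sq[OF g])
  also have "\<dots> = ennreal ((L2norm M f * L2norm M g)\<^sup>2)"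
    by (simp add: L2norm_def power_mult_distrib ennreal_mult)
  also have "\<dots> = (ennreal (L2norm M f * L2norm M g))\<^sup>2"
    by (simp add: ennreal_power L2norm_nonneg)
  finally have sq_le: "(\<integral>\<^sup>+x. ennreal \<bar>f x\<bar> * ennreal \<bar>g x\<bar> \<partial>M)\<^sup>2 \<le> (ennreal (L2norm M f * L2norm M g))\<^sup>2" .
  have "(\<integral>\<^sup>+x. ennreal \<bar>f x\<bar> * ennreal \<bar>g x\<bar> \<partial>M) \<le> ennreal (L2norm M f * L2norm M g)"
  proof (cases "\<integral>\<^sup>+x. ennreal \<bar>f x\<bar> * ennreal \<bar>g x\<bar> \<partial>M" rule: ennreal_cases)
    case (real r)
    then have "r\<^sup>2 \<le> (L2norm M f * L2norm M g)\<^sup>2"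
      using sq_le by (simp add: ennreal_power L2norm_nonneg)
    then have "r \<le> L2norm M f * L2norm M g"
      by (rule power2_le_imp_le) (simp add: L2norm_nonneg)
    then show ?thesis using real by simp
  qed (use sq_le in \<open>simp add: ennreal_power L2norm_nonneg top_unique\<close>)
  then have CS: "(\<integral>\<^sup>+x. ennreal (norm (f x * g x)) \<partial>M) \<le> ennreal (L2norm M f * L2norm M g)"
    by (simp add: abs_mult ennreal_mult)
  have "(\<integral>\<^sup>+x. ennreal (norm (f x * g x)) \<partial>M) < \<infinity>"
    using le_less_trans[OF CS ennreal_less_top] by simp
  then show int: "integrable M (\<lambda>x. f x * g x)"
    by (rule integrableI_bounded[rotated]) measurable
  show "(\<integral>x. \<bar>f x * g x\<bar> \<partial>M) \<le> L2norm M f * L2norm M g"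
    using CS int by (simp add: nn_integral_eq_integral L2norm_nonneg)
qed

section \<open>Bochner integrals in complete spaces\<close>

text \<open>The library derives integrability from integrability of the norm only for the class
  \<open>banach\<close>; the Hilbert space of the theorem has the sort \<open>{real_inner, complete_space}\<close>, which is
  not a subsort of \<open>banach\<close>, so the argument via simple functions is repeated here.\<close>

lemma simple_bochner_approximation:
  fixes f :: "'a \<Rightarrow> 'b::{real_normed_vector,second_countable_topology}"
  assumes f[measurable]: "f \<in> borel_measurable M" and norm_f: "integrable M (\<lambda>x. norm (f x))"
  obtains s where "\<And>i. Bochner_Integration.simple_bochner_integrable M (s i)"
    and "(\<lambda>i. \<integral>\<^sup>+x. norm (f x - s i x) \<partial>M) \<longlonglongrightarrow> 0"
proof -
  obtain s where s: "\<And>i. simple_function M (s i)"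
    and s_lim: "\<And>x. x \<in> space M \<Longrightarrow> (\<lambda>i. s i x) \<longlonglongrightarrow> f x"
    and s_bound: "\<And>i x. x \<in> space M \<Longrightarrow> norm (s i x) \<le> 2 * norm (f x)"
    using borel_measurable_implies_sequence_metric[OF f, of 0] by simp metis
  have fin: "(\<integral>\<^sup>+x. ennreal (2 * norm (f x)) \<partial>M) < \<infinity>"
    using norm_f by (simp add: integrable_iff_bounded ennreal_mult nn_integral_cmult ennreal_mult_less_top)
  show ?thesis
  proof (rule that)
    show "Bochner_Integration.simple_bochner_integrable M (s i)" for i
    proof (rule Bochner_Integration.simple_bochner_integrableI_bounded[OF s])
      have "(\<integral>\<^sup>+x. norm (s i x) \<partial>M) \<le> (\<integral>\<^sup>+x. ennreal (2 * norm (f x)) \<partial>M)"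
        using s_bound by (intro nn_integral_mono) simp
      then show "(\<integral>\<^sup>+x. norm (s i x) \<partial>M) < \<infinity>" using fin by (rule le_less_trans)
    qed
    show "(\<lambda>i. \<integral>\<^sup>+x. norm (f x - s i x) \<partial>M) \<longlonglongrightarrow> 0"
      using s s_bound s_lim fin
      by (intro nn_integral_dominated_convergence_norm[where w="\<lambda>x. 2 * norm (f x)"])
        (auto intro: borel_measurable_simple_function)
  qed
qed

lemma integrable_of_norm_integrable:
  fixes f :: "'a \<Rightarrow> 'b::{real_normed_vector,complete_space,second_countable_topology}"
  assumes f[measurable]: "f \<in> borel_measurable M" and norm_f: "integrable M (\<lambda>x. norm (f x))"
  shows "integrable M f"
proof -
  obtain s where s_int: "\<And>i. Bochner_Integration.simple_bochner_integrable M (s i)"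
    and L1: "(\<lambda>i. \<integral>\<^sup>+x. norm (f x - s i x) \<partial>M) \<longlonglongrightarrow> 0"
    using simple_bochner_approximation[OF f norm_f] by blast
  define I where "I i = Bochner_Integration.simple_bochner_integral M (s i)" for i
  have "Cauchy I"
  proof (rule metric_CauchyI)
    fix e :: real
    assume "0 < e"
    then obtain N where N: "\<And>n. n \<ge> N \<Longrightarrow> (\<integral>\<^sup>+x. norm (f x - s n x) \<partial>M) < ennreal (e / 2)"
      using order_tendstoD(2)[OF L1, of "ennreal (e / 2)"] by (auto simp: eventually_sequentially)
    have "dist (I m) (I n) < e" if "m \<ge> N" "n \<ge> N" for m n
    proof -
      have "ennreal (norm (I m - I n)) \<le> (\<integral>\<^sup>+x. norm (f x - s m x) \<partial>M) + (\<integral>\<^sup>+x. norm (f x - s n x) \<partial>M)"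
        unfolding I_def by (rule Bochner_Integration.simple_bochner_integral_bounded[OF f s_int s_int])
      also have "\<dots> < ennreal (e / 2) + ennreal (e / 2)"
        using N that by (intro add_strict_mono) auto
      also have "\<dots> = ennreal e" using \<open>0 < e\<close> by (simp flip: ennreal_plus)
      finally show ?thesis using \<open>0 < e\<close> by (simp add: dist_norm ennreal_less_iff)
    qed
    then show "\<exists>N. \<forall>m\<ge>N. \<forall>n\<ge>N. dist (I m) (I n) < e" by blast
  qed
  then obtain y where "I \<longlonglongrightarrow> y"
    by (auto simp: Cauchy_convergent_iff convergent_def)
  then have "has_bochner_integral M f y"
    using s_int L1 unfolding I_def by (intro has_bochner_integral.intros[of f M s]) auto
  then show ?thesis by (auto simp: integrable.simps)
qed

lemma norm_integral_le_integral_norm: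
  fixes f :: "'a \<Rightarrow> 'b::{real_normed_vector,second_countable_topology}"
  assumes "integrable M f" and "integrable M (\<lambda>x. norm (f x))"
  shows "norm (integral\<^sup>L M f) \<le> (\<integral>x. norm (f x) \<partial>M)"
  using integral_norm_bound_ennreal[OF assms(1)] nn_integral_eq_integral[OF assms(2)]
  by (simp add: ennreal_le_iff)

lemma L2_cauchy_schwarz_scaleR:
  fixes f :: "'a \<Rightarrow> 'b::{real_normed_vector,complete_space,second_countable_topology}"
  assumes g: "L2 M g" and f[measurable]: "f \<in> borel_measurable M" and norm_f: "L2 M (\<lambda>x. norm (f x))"
  shows "integrable M (\<lambda>x. g x *\<^sub>R f x)"
    and "norm (\<integral>x. g x *\<^sub>R f x \<partial>M) \<le> L2norm M g * L2normH M f"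
proof -
  have [measurable]: "g \<in> borel_measurable M" using g by (simp add: L2_def)
  have "(\<lambda>x. \<bar>g x * norm (f x)\<bar>) = (\<lambda>x. norm (g x *\<^sub>R f x))" by (simp add: abs_mult)
  then have norm_int: "integrable M (\<lambda>x. norm (g x *\<^sub>R f x))"
    using integrable_abs[OF L2_cauchy_schwarz(1)[OF g norm_f]] by simp
  show int: "integrable M (\<lambda>x. g x *\<^sub>R f x)"
    by (rule integrable_of_norm_integrable[OF _ norm_int]) measurable
  have "norm (\<integral>x. g x *\<^sub>R f x \<partial>M) \<le> (\<integral>x. \<bar>g x * norm (f x)\<bar> \<partial>M)"
    using norm_integral_le_integral_norm[OF int norm_int] by (simp add: abs_mult)
  also have "\<dots> \<le> L2norm M g * L2normH M f"
    using L2_cauchy_schwarz(2)[OF g norm_f] by (simp add: L2normH_def L2norm_def)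
  finally show "norm (\<integral>x. g x *\<^sub>R f x \<partial>M) \<le> L2norm M g * L2normH M f" .
qed

section \<open>Scores, the tangent space and the adjoint\<close>

lemma L2_sphere_chord_bound:
  assumes a: "L2 M a" and b: "L2 M b" and t: "L2 M t" and \<epsilon>: "0 < \<epsilon>"
    and sphere: "(\<integral>x. (a x)\<^sup>2 \<partial>M) = (\<integral>x. (b x)\<^sup>2 \<partial>M)"
  defines "n \<equiv> L2norm M (\<lambda>x. a x - b x - \<epsilon> * t x)"
  shows "\<bar>\<integral>x. b x * t x \<partial>M\<bar> \<le> L2norm M b * (n / \<epsilon>) + \<epsilon> * (\<integral>x. (t x)\<^sup>2 \<partial>M) + n * (n / \<epsilon>)"
proof -
  define r where "r x = a x - b x - \<epsilon> * t x" for x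
  define X where "X = (\<integral>x. b x * t x \<partial>M)"
  define T where "T = (\<integral>x. (t x)\<^sup>2 \<partial>M)"
  have r: "L2 M r" unfolding r_def by (intro L2_diff L2_scale a b t)
  have ab: "L2 M (\<lambda>x. a x - b x)" by (intro L2_diff a b)
  have "0 = (\<integral>x. (a x)\<^sup>2 \<partial>M) - (\<integral>x. (b x)\<^sup>2 \<partial>M)"
    using sphere by simp
  also have "\<dots> = (\<integral>x. (a x)\<^sup>2 - (b x)\<^sup>2 \<partial>M)"
    using a b by (simp add: L2_def)
  also have "\<dots> = (\<integral>x. 2 * \<epsilon> * (b x * t x) + 2 * (b x * r x) + (a x - b x)\<^sup>2 \<partial>M)"
    unfolding r_def by (simp add: power2_eq_square algebra_simps)
  also have "\<dots> = 2 * \<epsilon> * X + 2 * (\<integral>x. b x * r x \<partial>M) + (\<integral>x. (a x - b x)\<^sup>2 \<partial>M)"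
    unfolding X_def using L2_cauchy_schwarz(1)[OF b t] L2_cauchy_schwarz(1)[OF b r] ab
    by (simp add: L2_def)
  finally have identity: "0 = 2 * \<epsilon> * X + 2 * (\<integral>x. b x * r x \<partial>M) + (\<integral>x. (a x - b x)\<^sup>2 \<partial>M)" .
  have "\<bar>\<integral>x. b x * r x \<partial>M\<bar> \<le> L2norm M b * n"
    unfolding n_def r_def[symmetric] using integral_abs_bound L2_cauchy_schwarz(2)[OF b r] by (rule order_trans)
  moreover have "(\<integral>x. (a x - b x)\<^sup>2 \<partial>M) \<le> (\<integral>x. 2 * \<epsilon>\<^sup>2 * (t x)\<^sup>2 + 2 * (r x)\<^sup>2 \<partial>M)"
  proof (rule integral_mono)
    show "integrable M (\<lambda>x. (a x - b x)\<^sup>2)" using ab by (simp add: L2_def)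
    show "integrable M (\<lambda>x. 2 * \<epsilon>\<^sup>2 * (t x)\<^sup>2 + 2 * (r x)\<^sup>2)" using t r by (simp add: L2_def)
    show "(a x - b x)\<^sup>2 \<le> 2 * \<epsilon>\<^sup>2 * (t x)\<^sup>2 + 2 * (r x)\<^sup>2" for x
      using sum_squares_bound[of "\<epsilon> * t x" "r x"]
      unfolding r_def by (simp add: power2_eq_square algebra_simps)
  qed
  moreover have "(\<integral>x. 2 * \<epsilon>\<^sup>2 * (t x)\<^sup>2 + 2 * (r x)\<^sup>2 \<partial>M) = 2 * \<epsilon>\<^sup>2 * T + 2 * n\<^sup>2"
    unfolding T_def n_def r_def[symmetric] L2norm_def using t r by (simp add: L2_def)
  moreover have "0 \<le> (\<integral>x. (a x - b x)\<^sup>2 \<partial>M)" by simp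
  ultimately have "\<bar>2 * \<epsilon> * X\<bar> \<le> 2 * (L2norm M b * n) + 2 * \<epsilon>\<^sup>2 * T + 2 * n\<^sup>2"
    using identity by (simp only: abs_le_iff) linarith
  then have "\<epsilon> * \<bar>X\<bar> \<le> L2norm M b * n + \<epsilon>\<^sup>2 * T + n\<^sup>2"
    using \<epsilon> by (simp add: abs_mult)
  then show ?thesis
    unfolding X_def[symmetric] T_def[symmetric] using \<epsilon> by (simp add: field_simps power2_eq_square)
qed

lemma L2_path_on_sphere_tangent_orthogonal:
  fixes a :: "real \<Rightarrow> 'a \<Rightarrow> real"
  assumes b: "L2 M b" and t: "L2 M t" and \<delta>: "0 < \<delta>"
    and a: "\<And>\<epsilon>. \<epsilon> \<in> {0<..<\<delta>} \<Longrightarrow> L2 M (a \<epsilon>)"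
    and sphere: "\<And>\<epsilon>. \<epsilon> \<in> {0<..<\<delta>} \<Longrightarrow> (\<integral>x. (a \<epsilon> x)\<^sup>2 \<partial>M) = (\<integral>x. (b x)\<^sup>2 \<partial>M)"
    and tangent: "((\<lambda>\<epsilon>. L2norm M (\<lambda>x. a \<epsilon> x - b x - \<epsilon> * t x) / \<epsilon>) \<longlongrightarrow> 0) (at_right 0)"
  shows "(\<integral>x. b x * t x \<partial>M) = 0"
proof -
  define n where "n \<epsilon> = L2norm M (\<lambda>x. a \<epsilon> x - b x - \<epsilon> * t x)" for \<epsilon>
  define T where "T = (\<integral>x. (t x)\<^sup>2 \<partial>M)"
  have n_quot: "((\<lambda>\<epsilon>. n \<epsilon> / \<epsilon>) \<longlongrightarrow> 0) (at_right 0)"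
    using tangent unfolding n_def .
  have "((\<lambda>\<epsilon>. n \<epsilon>) \<longlongrightarrow> 0) (at_right 0)"
  proof -
    have "((\<lambda>\<epsilon>. \<epsilon> * (n \<epsilon> / \<epsilon>)) \<longlongrightarrow> 0 * 0) (at_right 0)"
      by (intro tendsto_mult n_quot) (simp add: tendsto_ident_at)
    moreover have "\<forall>\<^sub>F \<epsilon> in at_right 0. \<epsilon> * (n \<epsilon> / \<epsilon>) = n \<epsilon>"
      by (rule eventually_at_rightI[of 0 1]) auto
    ultimately show ?thesis by (simp add: tendsto_cong)
  qed
  then have "((\<lambda>\<epsilon>. L2norm M b * (n \<epsilon> / \<epsilon>) + \<epsilon> * T + n \<epsilon> * (n \<epsilon> / \<epsilon>))
      \<longlongrightarrow> L2norm M b * 0 + 0 * T + 0 * 0) (at_right 0)"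
    by (intro tendsto_intros n_quot) (simp add: tendsto_ident_at)
  moreover have "\<forall>\<^sub>F \<epsilon> in at_right 0. \<bar>\<integral>x. b x * t x \<partial>M\<bar> \<le> L2norm M b * (n \<epsilon> / \<epsilon>) + \<epsilon> * T + n \<epsilon> * (n \<epsilon> / \<epsilon>)"
    using eventually_at_right_real[OF \<delta>]
  proof eventually_elim
    case (elim \<epsilon>)
    then have "0 < \<epsilon>" by simp
    then show ?case
      unfolding n_def T_def by (rule L2_sphere_chord_bound[OF a[OF elim] b t _ sphere[OF elim]])
  qed
  ultimately have "\<bar>\<integral>x. b x * t x \<partial>M\<bar> \<le> 0"
    by (intro tendsto_lowerbound[of _ _ "at_right 0"]) auto
  then show ?thesis by simp
qed

lemma dominated_modelD:
  assumes "dominated_model lam Ps" "Q \<in> Ps"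
  shows "sigma_finite_measure lam" "sets lam = sets borel" "prob_space Q" "sets Q = sets borel"
    "absolutely_continuous lam Q"
  using assms by (auto simp: dominated_model_def)

lemma model_integral_density:
  fixes f :: "'z::polish_space \<Rightarrow> real"
  assumes model: "dominated_model lam Ps" and Q: "Q \<in> Ps" and f: "f \<in> borel_measurable borel"
  shows "integral\<^sup>L Q f = (\<integral>x. dens lam Q x * f x \<partial>lam)"
    and "integrable Q f \<longleftrightarrow> integrable lam (\<lambda>x. dens lam Q x * f x)"
proof -
  note facts = dominated_modelD[OF model Q]
  interpret sigma_finite_measure lam by (fact facts(1))
  have "sigma_finite_measure Q" using facts(3) by (rule prob_space_imp_sigma_finite)
  moreover have "f \<in> borel_measurable lam" using f facts(2) by (simp cong: measurable_cong_sets)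
  moreover have "sets Q = sets lam" using facts by simp
  ultimately show "integral\<^sup>L Q f = (\<integral>x. dens lam Q x * f x \<partial>lam)"
    and "integrable Q f \<longleftrightarrow> integrable lam (\<lambda>x. dens lam Q x * f x)"
    using RN_deriv_integral RN_deriv_integrable facts(5) by (simp_all add: dens_def)
qed

lemma sqrt_dens_L2:
  assumes model: "dominated_model lam Ps" and Q: "Q \<in> Ps"
  shows "L2 lam (\<lambda>x. sqrt (dens lam Q x))" and "(\<integral>x. (sqrt (dens lam Q x))\<^sup>2 \<partial>lam) = 1"
proof -
  interpret prob_space Q using dominated_modelD[OF model Q] by simp
  have sq: "(sqrt (dens lam Q x))\<^sup>2 = dens lam Q x * 1" for x
    by (simp add: dens_def)
  show "(\<integral>x. (sqrt (dens lam Q x))\<^sup>2 \<partial>lam) = 1"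
    using model_integral_density(1)[OF model Q, of "\<lambda>_. 1"] by (simp add: sq prob_space)
  show "L2 lam (\<lambda>x. sqrt (dens lam Q x))"
    using model_integral_density(2)[OF model Q, of "\<lambda>_. 1"] by (simp add: L2_def sq dens_def)
qed

lemma tangent_set_mean_zero:
  assumes model: "dominated_model lam Ps" and P: "P \<in> Ps" and s: "s \<in> tangent_set lam Ps P"
  shows "integral\<^sup>L P s = 0"
proof -
  obtain \<delta> Pe where s_L2: "L2 P s" and sub: "submodel lam Ps P s \<delta> Pe"
    using s unfolding tangent_set_def by blast
  note facts = dominated_modelD[OF model P]
  have [measurable]: "s \<in> borel_measurable borel"
    using s_L2 facts(4) by (simp add: L2_def cong: measurable_cong_sets)
  define b where "b x = sqrt (dens lam P x)" for x
  define t where "t x = s x * b x / 2" for x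
  have b_sq: "(b x)\<^sup>2 = dens lam P x" for x by (simp add: b_def dens_def)
  have b: "L2 lam b" and b_norm: "(\<integral>x. (b x)\<^sup>2 \<partial>lam) = 1"
    unfolding b_def using sqrt_dens_L2[OF model P] by auto
  have t: "L2 lam t"
  proof -
    have sq: "(\<lambda>x. (t x)\<^sup>2) = (\<lambda>x. dens lam P x * ((s x)\<^sup>2 / 4))"
      by (simp add: fun_eq_iff t_def power_mult_distrib power_divide b_sq)
    have "integrable lam (\<lambda>x. dens lam P x * ((s x)\<^sup>2 / 4))"
      using s_L2 model_integral_density(2)[OF model P, of "\<lambda>x. (s x)\<^sup>2 / 4"] by (simp add: L2_def)
    moreover have "t \<in> borel_measurable lam"
      unfolding t_def b_def dens_def using facts(2) by (simp cong: measurable_cong_sets)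
    ultimately show ?thesis unfolding L2_def sq by blast
  qed
  have "(\<integral>x. b x * t x \<partial>lam) = 0"
  proof (rule L2_path_on_sphere_tangent_orthogonal[OF b t])
    show "0 < \<delta>" using sub by (simp add: submodel_def)
    fix \<epsilon> assume "\<epsilon> \<in> {0<..<\<delta>}"
    then have "Pe \<epsilon> \<in> Ps" using sub by (simp add: submodel_def)
    then show "L2 lam (\<lambda>x. sqrt (dens lam (Pe \<epsilon>) x))"
      and "(\<integral>x. (sqrt (dens lam (Pe \<epsilon>) x))\<^sup>2 \<partial>lam) = (\<integral>x. (b x)\<^sup>2 \<partial>lam)"
      using sqrt_dens_L2[OF model] b_norm by simp_all
  next
    have "(\<lambda>x. sqrt (dens lam (Pe \<epsilon>) x) - b x - \<epsilon> * t x)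
        = (\<lambda>x. sqrt (dens lam (Pe \<epsilon>) x) - sqrt (dens lam P x) - \<epsilon> * s x * sqrt (dens lam P x) / 2)" for \<epsilon>
      by (simp add: b_def t_def mult.assoc)
    then show "((\<lambda>\<epsilon>. L2norm lam (\<lambda>x. sqrt (dens lam (Pe \<epsilon>) x) - b x - \<epsilon> * t x) / \<epsilon>) \<longlongrightarrow> 0) (at_right 0)"
      using sub by (simp add: submodel_def)
  qed
  moreover have "(\<integral>x. b x * t x \<partial>lam) = integral\<^sup>L P s / 2"
    using model_integral_density(1)[OF model P, of "\<lambda>x. s x / 2"]
    by (simp add: t_def power2_eq_square mult_ac flip: b_sq)
  ultimately show ?thesis by simp
qed

lemma tangent_set_subset_tangent_space: "tangent_set lam Ps P \<subseteq> tangent_space lam Ps P"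
proof
  fix s assume s: "s \<in> tangent_set lam Ps P"
  have "s \<in> lin_comb (tangent_set lam Ps P)"
    unfolding lin_comb_def using s
    by (intro CollectI exI[of _ "1::nat"] exI[of _ "\<lambda>_. 1::real"] exI[of _ "\<lambda>_. s"]) auto
  moreover have "L2norm P (\<lambda>z. s z - s z) = 0" by (simp add: L2norm_def)
  ultimately show "s \<in> tangent_space lam Ps P"
    using s unfolding tangent_space_def tangent_set_def by force
qed

lemma tangent_space_mean_zero:
  assumes model: "dominated_model lam Ps" and P: "P \<in> Ps" and f: "f \<in> tangent_space lam Ps P"
  shows "integral\<^sup>L P f = 0"
proof -
  interpret prob_space P using dominated_modelD[OF model P] by simp
  have f_L2: "L2 P f" using f by (simp add: tangent_space_def)
  have "\<bar>integral\<^sup>L P f\<bar> < e" if "0 < e" for e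
  proof -
    obtain g where "g \<in> lin_comb (tangent_set lam Ps P)" and close: "L2norm P (\<lambda>z. f z - g z) < e"
      using f \<open>0 < e\<close> unfolding tangent_space_def by blast
    then obtain n :: nat and c t where g: "g = (\<lambda>z. \<Sum>i<n. c i * t i z)"
      and t: "\<And>i. i < n \<Longrightarrow> t i \<in> tangent_set lam Ps P"
      unfolding lin_comb_def by blast
    have t_L2: "L2 P (t i)" if "i < n" for i using t[OF that] by (simp add: tangent_set_def)
    have g_L2: "L2 P g" unfolding g by (intro L2_sum L2_scale t_L2) simp
    have "integral\<^sup>L P g = (\<Sum>i<n. c i * integral\<^sup>L P (t i))"
      unfolding g using L2_integrable[OF finite_measure_axioms t_L2] by simp
    then have "integral\<^sup>L P g = 0"
      using tangent_set_mean_zero[OF model P t] by simp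
    then have "integral\<^sup>L P f = (\<integral>z. (f z - g z) * 1 \<partial>P)"
      using L2_integrable[OF finite_measure_axioms f_L2] L2_integrable[OF finite_measure_axioms g_L2] by simp
    also have "\<bar>\<dots>\<bar> \<le> L2norm P (\<lambda>z. f z - g z) * L2norm P (\<lambda>z. 1)"
      using integral_abs_bound L2_cauchy_schwarz(2)[OF L2_diff[OF f_L2 g_L2] L2_const[OF finite_measure_axioms]]
      by (rule order_trans)
    also have "L2norm P (\<lambda>z. 1) = 1" by (simp add: L2norm_def prob_space)
    finally show ?thesis using close by simp
  qed
  then show ?thesis by (metis less_irrefl zero_less_abs_iff)
qed

lemma adjoint_ofD:
  assumes model: "dominated_model lam Ps" and P: "P \<in> Ps" and adj: "adjoint_of lam Ps P D A"
    and f: "f \<in> tangent_space lam Ps P"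
  shows "L2 P (A x)" and "integral\<^sup>L P (A x) = 0" and "(\<integral>z. f z * A x z \<partial>P) = inner (D f) x"
  using adj f tangent_space_mean_zero[OF model P] by (auto simp: adjoint_of_def tangent_space_def)

lemma adjoint_bounded:
  assumes deriv: "pathwise_deriv lam Ps \<nu> P D" and adj: "adjoint_of lam Ps P D A"
  obtains C where "0 \<le> C" and "\<And>x. L2norm P (A x) \<le> C * norm x"
proof -
  obtain C where C: "\<And>f. f \<in> tangent_space lam Ps P \<Longrightarrow> norm (D f) \<le> C * L2norm P f"
    using deriv unfolding pathwise_deriv_def by blast
  have "L2norm P (A x) \<le> max C 0 * norm x" for x
  proof -
    define L where "L = L2norm P (A x)"
    have L: "0 \<le> L" by (simp add: L_def L2norm_nonneg)
    have tangent: "A x \<in> tangent_space lam Ps P" using adj by (simp add: adjoint_of_def)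
    have "L * L = inner (D (A x)) x"
      using adj tangent by (simp add: adjoint_of_def L_def L2norm_def power2_eq_square)
    also have "\<dots> \<le> norm (D (A x)) * norm x" by (rule norm_cauchy_schwarz)
    also have "\<dots> \<le> (max C 0 * L) * norm x"
    proof (rule mult_right_mono)
      have "C * L \<le> max C 0 * L" using L by (intro mult_right_mono) auto
      then show "norm (D (A x)) \<le> max C 0 * L" using C[OF tangent] by (simp add: L_def)
    qed simp
    finally have "L * L \<le> (max C 0 * norm x) * L" by (simp add: mult_ac)
    then show ?thesis
      using L by (cases "L = 0") (auto simp: L_def dest: mult_right_le_imp_le)
  qed
  then show ?thesis by (intro that[of "max C 0"]) auto
qed

lemma adjoint_bounded_on_padded_onb:
  assumes deriv: "pathwise_deriv lam Ps \<nu> P D" and adj: "adjoint_of lam Ps P D A"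
    and basis: "padded_onb h"
  obtains K where "\<And>k. (\<integral>z. (A (h k) z)\<^sup>2 \<partial>P) \<le> K"
proof -
  obtain C where "0 \<le> C" and C: "\<And>x. L2norm P (A x) \<le> C * norm x"
    using adjoint_bounded[OF deriv adj] by blast
  have "(\<integral>z. (A (h k) z)\<^sup>2 \<partial>P) \<le> C\<^sup>2" for k
  proof -
    have "(\<integral>z. (A (h k) z)\<^sup>2 \<partial>P) = (L2norm P (A (h k)))\<^sup>2" by (simp add: L2norm_def)
    also have "\<dots> \<le> (C * norm (h k))\<^sup>2" using C[of "h k"] by (simp add: L2norm_nonneg power_mono)
    also have "\<dots> \<le> C\<^sup>2"
      using padded_onb_norm_le_1[OF basis, of k] \<open>0 \<le> C\<close>
      by (simp add: power_mult_distrib mult_left_le power_le_one)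
    finally show ?thesis .
  qed
  then show ?thesis by (rule that)
qed

lemma pathwise_deriv_along_submodel:
  assumes "pathwise_deriv lam Ps \<nu> P D" and "s \<in> tangent_set lam Ps P" and "submodel lam Ps P s \<delta> Pe"
  shows "((\<lambda>\<epsilon>. norm (\<nu> P - \<nu> (Pe \<epsilon>) + \<epsilon> *\<^sub>R D s) / \<epsilon>) \<longlongrightarrow> 0) (at_right 0)"
proof -
  have "norm (\<nu> P - \<nu> (Pe \<epsilon>) + \<epsilon> *\<^sub>R D s) = norm (\<nu> (Pe \<epsilon>) - \<nu> P - \<epsilon> *\<^sub>R D s)" for \<epsilon>
  proof -
    have "\<nu> P - \<nu> (Pe \<epsilon>) + \<epsilon> *\<^sub>R D s = - (\<nu> (Pe \<epsilon>) - \<nu> P - \<epsilon> *\<^sub>R D s)" by simp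
    then show ?thesis by (simp only: norm_minus_cancel)
  qed
  moreover have "((\<lambda>\<epsilon>. norm (\<nu> (Pe \<epsilon>) - \<nu> P - \<epsilon> *\<^sub>R D s) / \<epsilon>) \<longlongrightarrow> 0) (at_right 0)"
    using assms unfolding pathwise_deriv_def by blast
  ultimately show ?thesis by simp
qed

section \<open>The series \<open>phi\<close>\<close>

lemma inner_phi:
  assumes basis: "padded_onb h" and summable: "summable (\<lambda>k. (\<beta> k * A (h k) z)\<^sup>2)"
  shows "inner (phi A h \<beta> z) (h j) = \<beta> j * A (h j) z * inner (h j) (h j)"
proof -
  note orth = padded_onb_orthogonal[OF basis]
  have "summable (\<lambda>k. (\<beta> k * A (h k) z) *\<^sub>R h k)" by (rule summable_padded_onb_series[OF basis summable])
  then show ?thesis using inner_suminf_orthogonal[where h=h, OF orth] by (simp add: phi_def)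
qed

lemma norm_phi_sq_le:
  assumes basis: "padded_onb h"
  shows "ennreal ((norm (phi A h \<beta> z))\<^sup>2) \<le> (\<Sum>k. ennreal ((\<beta> k * A (h k) z)\<^sup>2))"
proof (cases "summable (\<lambda>k. (\<beta> k * A (h k) z) *\<^sub>R h k)")
  case True
  note orth = padded_onb_orthogonal[OF basis]
  have sums: "(\<lambda>k. (\<beta> k * A (h k) z)\<^sup>2 * (norm (h k))\<^sup>2) sums (norm (phi A h \<beta> z))\<^sup>2"
    using sums_norm_sq_orthogonal_series[OF orth True] True by (simp add: phi_def)
  have "ennreal ((norm (phi A h \<beta> z))\<^sup>2) = (\<Sum>k. ennreal ((\<beta> k * A (h k) z)\<^sup>2 * (norm (h k))\<^sup>2))"
    by (rule suminf_ennreal_eq[OF _ sums, symmetric]) simp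
  also have "\<dots> \<le> (\<Sum>k. ennreal ((\<beta> k * A (h k) z)\<^sup>2))"
  proof (rule suminf_le[OF ennreal_leI summableI summableI])
    fix k
    have "(norm (h k))\<^sup>2 \<le> 1" using padded_onb_norm_le_1[OF basis, of k] by (simp add: power_le_one)
    then show "(\<beta> k * A (h k) z)\<^sup>2 * (norm (h k))\<^sup>2 \<le> (\<beta> k * A (h k) z)\<^sup>2"
      by (simp add: mult_left_le)
  qed
  finally show ?thesis .
qed (simp add: phi_def)

lemma inner_integral_scaleR_phi:
  fixes A :: "'h::{real_inner,complete_space,second_countable_topology} \<Rightarrow> 'z \<Rightarrow> real"
  assumes coefficient: "AE z in M. inner (phi A h \<beta> z) (h j) = \<beta> j * A (h j) z * inner (h j) (h j)"
    and integrable: "integrable M (\<lambda>z. g z *\<^sub>R phi A h \<beta> z)"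
    and [measurable]: "g \<in> borel_measurable M" "A (h j) \<in> borel_measurable M"
  shows "inner (\<integral>z. g z *\<^sub>R phi A h \<beta> z \<partial>M) (h j) = \<beta> j * inner (h j) (h j) * (\<integral>z. g z * A (h j) z \<partial>M)"
proof -
  have "inner (\<integral>z. g z *\<^sub>R phi A h \<beta> z \<partial>M) (h j) = (\<integral>z. g z * inner (phi A h \<beta> z) (h j) \<partial>M)"
    using integral_bounded_linear[OF bounded_linear_inner_left integrable, of "h j"] by simp
  also have "\<dots> = (\<integral>z. \<beta> j * inner (h j) (h j) * (g z * A (h j) z) \<partial>M)"
  proof (rule integral_cong_AE)
    have [measurable]: "(\<lambda>z. g z *\<^sub>R phi A h \<beta> z) \<in> borel_measurable M"
      using integrable by (rule borel_measurable_integrable)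
    have "(\<lambda>z. inner (g z *\<^sub>R phi A h \<beta> z) (h j)) \<in> borel_measurable M" by measurable
    then show "(\<lambda>z. g z * inner (phi A h \<beta> z) (h j)) \<in> borel_measurable M" by simp
    show "AE z in M. g z * inner (phi A h \<beta> z) (h j) = \<beta> j * inner (h j) (h j) * (g z * A (h j) z)"
      using coefficient by eventually_elim (simp add: mult_ac)
  qed measurable
  finally show ?thesis by simp
qed

context
  fixes P :: "'z measure" and A :: "'h::{real_inner,complete_space,second_countable_topology} \<Rightarrow> 'z \<Rightarrow> real"
    and h :: "nat \<Rightarrow> 'h" and \<beta> :: "nat \<Rightarrow> real" and K :: real
  assumes basis: "padded_onb h"
    and A_L2: "\<And>k. L2 P (A (h k))"
    and A_bound: "\<And>k. (\<integral>z. (A (h k) z)\<^sup>2 \<partial>P) \<le> K"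
    and \<beta>: "summable (\<lambda>k. (\<beta> k)\<^sup>2)"
begin

lemma A_basis_measurable[measurable]: "A (h k) \<in> borel_measurable P"
  using A_L2 by (simp add: L2_def)

lemma nn_integral_phi_coefficients:
  "(\<integral>\<^sup>+z. (\<Sum>k. ennreal ((\<beta> k * A (h k) z)\<^sup>2)) \<partial>P) \<le> ennreal (K * (\<Sum>k. (\<beta> k)\<^sup>2))"
proof -
  have "0 \<le> (\<integral>z. (A (h 0) z)\<^sup>2 \<partial>P)" by simp
  then have K: "0 \<le> K" using A_bound[of 0] by linarith
  have "(\<integral>\<^sup>+z. (\<Sum>k. ennreal ((\<beta> k * A (h k) z)\<^sup>2)) \<partial>P) = (\<Sum>k. \<integral>\<^sup>+z. ennreal ((\<beta> k)\<^sup>2 * (A (h k) z)\<^sup>2) \<partial>P)"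
    by (simp add: nn_integral_suminf power_mult_distrib)
  also have "\<dots> = (\<Sum>k. ennreal ((\<beta> k)\<^sup>2 * (\<integral>z. (A (h k) z)\<^sup>2 \<partial>P)))"
    using A_L2 by (simp add: L2_def nn_integral_eq_integral)
  also have "\<dots> \<le> (\<Sum>k. ennreal ((\<beta> k)\<^sup>2 * K))"
    using A_bound by (intro suminf_le ennreal_leI mult_left_mono) auto
  also have "\<dots> = ennreal (\<Sum>k. (\<beta> k)\<^sup>2 * K)"
    using K \<beta> by (intro suminf_ennreal2 summable_mult2) auto
  also have "(\<Sum>k. (\<beta> k)\<^sup>2 * K) = K * (\<Sum>k. (\<beta> k)\<^sup>2)"
    using suminf_mult2[OF \<beta>, of K] by (simp add: mult.commute)
  finally show ?thesis .
qed

lemma AE_summable_phi_coefficients: "AE z in P. summable (\<lambda>k. (\<beta> k * A (h k) z)\<^sup>2)"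
proof -
  have "AE z in P. (\<Sum>k. ennreal ((\<beta> k * A (h k) z)\<^sup>2)) \<noteq> \<infinity>"
    using nn_integral_phi_coefficients by (intro nn_integral_PInf_AE) (auto simp: top_unique)
  then show ?thesis by eventually_elim (rule summable_suminf_not_top; simp)
qed

lemma AE_inner_phi: "AE z in P. inner (phi A h \<beta> z) (h j) = \<beta> j * A (h j) z * inner (h j) (h j)"
  using AE_summable_phi_coefficients by eventually_elim (rule inner_phi[OF basis])

lemma phi_measurable[measurable]: "phi A h \<beta> \<in> borel_measurable P"
proof -
  define S where "S z \<longleftrightarrow> (\<Sum>k. ennreal ((\<beta> k * A (h k) z)\<^sup>2 * (norm (h k))\<^sup>2)) < \<top>" for z
  have S_iff: "S z \<longleftrightarrow> summable (\<lambda>k. (\<beta> k * A (h k) z) *\<^sub>R h k)" for z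
  proof -
    note orth = padded_onb_orthogonal[OF basis]
    have "S z \<longleftrightarrow> summable (\<lambda>k. (\<beta> k * A (h k) z)\<^sup>2 * (norm (h k))\<^sup>2)"
    proof
      assume "S z"
      then show "summable (\<lambda>k. (\<beta> k * A (h k) z)\<^sup>2 * (norm (h k))\<^sup>2)"
        unfolding S_def by (intro summable_suminf_not_top) auto
    qed (simp add: S_def suminf_ennreal2)
    also have "\<dots> \<longleftrightarrow> summable (\<lambda>k. (\<beta> k * A (h k) z) *\<^sub>R h k)"
      by (rule summable_orthogonal_series_iff[OF orth, symmetric])
    finally show ?thesis .
  qed
  have [measurable]: "Measurable.pred P S" unfolding S_def by measurable
  define F where "F n z = (if S z then (\<Sum>k<n. (\<beta> k * A (h k) z) *\<^sub>R h k) else 0)" for n z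
  have "F n \<in> borel_measurable P" for n unfolding F_def by measurable
  moreover have "(\<lambda>n. F n z) \<longlonglongrightarrow> phi A h \<beta> z" for z
  proof (cases "S z")
    case True
    then have "summable (\<lambda>k. (\<beta> k * A (h k) z) *\<^sub>R h k)" by (simp only: S_iff)
    moreover have "F n z = (\<Sum>k<n. (\<beta> k * A (h k) z) *\<^sub>R h k)" for n
      using True by (simp only: F_def if_True)
    ultimately show ?thesis by (simp only: phi_def if_True summable_LIMSEQ)
  next
    case False
    then show ?thesis by (simp only: F_def phi_def S_iff if_False tendsto_const)
  qed
  ultimately show ?thesis by (rule borel_measurable_LIMSEQ_metric)
qed

lemma phi_square_integrable: "integrable P (\<lambda>z. (norm (phi A h \<beta> z))\<^sup>2)"
proof (rule integrableI_bounded)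
  show "(\<lambda>z. (norm (phi A h \<beta> z))\<^sup>2) \<in> borel_measurable P" by measurable
  have "(\<integral>\<^sup>+z. ennreal (norm ((norm (phi A h \<beta> z))\<^sup>2)) \<partial>P) = (\<integral>\<^sup>+z. ennreal ((norm (phi A h \<beta> z))\<^sup>2) \<partial>P)"
    by simp
  also have "\<dots> \<le> (\<integral>\<^sup>+z. (\<Sum>k. ennreal ((\<beta> k * A (h k) z)\<^sup>2)) \<partial>P)"
    by (rule nn_integral_mono) (rule norm_phi_sq_le[OF basis])
  also have "\<dots> < \<infinity>" using le_less_trans[OF nn_integral_phi_coefficients ennreal_less_top] by simp
  finally show "(\<integral>\<^sup>+z. ennreal (norm ((norm (phi A h \<beta> z))\<^sup>2)) \<partial>P) < \<infinity>" .
qed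

lemma phi_norm_L2: "L2 P (\<lambda>z. norm (phi A h \<beta> z))"
  unfolding L2_def
proof
  show "(\<lambda>z. norm (phi A h \<beta> z)) \<in> borel_measurable P" by measurable
qed (rule phi_square_integrable)

context
  fixes Q :: "'z measure" and s :: "'z \<Rightarrow> real" and d :: 'h and \<epsilon> :: real
  assumes P: "finite_measure P"
    and Q: "finite_measure Q" "absolutely_continuous P Q" "sets Q = sets P"
    and A_mean: "\<And>k. integral\<^sup>L P (A (h k)) = 0"
    and A_score: "\<And>k. (\<integral>z. s z * A (h k) z \<partial>P) = inner d (h k)"
    and \<beta>01: "\<And>k. 0 \<le> \<beta> k \<and> \<beta> k \<le> 1"
    and s: "L2 P s"
    and remainder: "L2 P (\<lambda>z. enn2real (RN_deriv P Q z) - 1 - \<epsilon> * s z)"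
begin

lemma RN_deriv_L2: "L2 P (\<lambda>z. enn2real (RN_deriv P Q z))"
proof -
  have "L2 P (\<lambda>z. (enn2real (RN_deriv P Q z) - 1 - \<epsilon> * s z) + (1 + \<epsilon> * s z))"
    by (intro L2_add L2_const L2_scale remainder s P)
  then show ?thesis by simp
qed

lemma real_integral_RN_deriv:
  fixes f :: "'z \<Rightarrow> real"
  assumes "f \<in> borel_measurable P"
  shows "integral\<^sup>L Q f = (\<integral>z. enn2real (RN_deriv P Q z) * f z \<partial>P)"
    and "integrable Q f \<longleftrightarrow> integrable P (\<lambda>z. enn2real (RN_deriv P Q z) * f z)"
proof -
  interpret P: finite_measure P by (fact P)
  have "sigma_finite_measure Q" using Q(1) by (rule finite_measure.axioms(1))
  then show "integral\<^sup>L Q f = (\<integral>z. enn2real (RN_deriv P Q z) * f z \<partial>P)"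
    and "integrable Q f \<longleftrightarrow> integrable P (\<lambda>z. enn2real (RN_deriv P Q z) * f z)"
    using P.RN_deriv_integral P.RN_deriv_integrable Q(2,3) assms by simp_all
qed

lemma phi_integrable_Q: "integrable Q (phi A h \<beta>)"
proof (rule integrable_of_norm_integrable)
  show "phi A h \<beta> \<in> borel_measurable Q" using Q(3) by (simp cong: measurable_cong_sets)
  show "integrable Q (\<lambda>z. norm (phi A h \<beta> z))"
    using real_integral_RN_deriv(2) L2_cauchy_schwarz(1)[OF RN_deriv_L2 phi_norm_L2] by simp
qed

lemma inner_debiasing_term:
  "inner ((\<integral>z. phi A h \<beta> z \<partial>Q) - (\<integral>z. (enn2real (RN_deriv P Q z) - 1 - \<epsilon> * s z) *\<^sub>R phi A h \<beta> z \<partial>P)) (h j)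
    = \<epsilon> * \<beta> j * inner d (h j)"
proof -
  define \<rho> where "\<rho> = (\<lambda>z. enn2real (RN_deriv P Q z))"
  define r where "r = (\<lambda>z. \<rho> z - 1 - \<epsilon> * s z)"
  define c where "c = inner (h j) (h j)"
  have [measurable]: "s \<in> borel_measurable P" using s by (simp add: L2_def)
  have "inner (\<integral>z. 1 *\<^sub>R phi A h \<beta> z \<partial>Q) (h j) = \<beta> j * c * (\<integral>z. 1 * A (h j) z \<partial>Q)"
    unfolding c_def
  proof (rule inner_integral_scaleR_phi)
    show "AE z in Q. inner (phi A h \<beta> z) (h j) = \<beta> j * A (h j) z * inner (h j) (h j)"
      using absolutely_continuous_AE[OF Q(3,2) AE_inner_phi] .
    show "integrable Q (\<lambda>z. 1 *\<^sub>R phi A h \<beta> z)" using phi_integrable_Q by simp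
    show "A (h j) \<in> borel_measurable Q" using Q(3) by (simp cong: measurable_cong_sets)
  qed simp
  then have Q_coefficient: "inner (\<integral>z. phi A h \<beta> z \<partial>Q) (h j) = \<beta> j * c * (\<integral>z. \<rho> z * A (h j) z \<partial>P)"
    using real_integral_RN_deriv(1) by (simp add: \<rho>_def)
  have "inner (\<integral>z. r z *\<^sub>R phi A h \<beta> z \<partial>P) (h j) = \<beta> j * c * (\<integral>z. r z * A (h j) z \<partial>P)"
    unfolding c_def
    by (rule inner_integral_scaleR_phi[OF AE_inner_phi L2_cauchy_schwarz_scaleR(1)[OF _ _ phi_norm_L2]])
      (simp_all add: r_def \<rho>_def remainder)
  moreover have "(\<integral>z. \<rho> z * A (h j) z \<partial>P) - (\<integral>z. r z * A (h j) z \<partial>P) = (\<integral>z. A (h j) z + \<epsilon> * (s z * A (h j) z) \<partial>P)"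
    using L2_cauchy_schwarz(1)[OF RN_deriv_L2 A_L2] L2_cauchy_schwarz(1)[OF remainder A_L2]
    by (simp add: r_def \<rho>_def algebra_simps flip: Bochner_Integration.integral_diff)
  moreover have "\<dots> = \<epsilon> * inner d (h j)"
    using L2_integrable[OF P A_L2] L2_cauchy_schwarz(1)[OF s A_L2] A_mean A_score by simp
  ultimately have "inner ((\<integral>z. phi A h \<beta> z \<partial>Q) - (\<integral>z. r z *\<^sub>R phi A h \<beta> z \<partial>P)) (h j) = \<epsilon> * \<beta> j * (inner d (h j) * c)"
    using Q_coefficient by (simp add: inner_diff_left right_diff_distrib[symmetric] algebra_simps)
  then show ?thesis by (simp add: r_def \<rho>_def c_def padded_onb_inner_mult_inner_self[OF basis])
qed

lemma debiased_remainder_bound: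
  "norm (\<Delta> + (\<integral>z. phi A h \<beta> z \<partial>Q) - (\<Sum>k. ((1 - \<beta> k) * inner \<Delta> (h k)) *\<^sub>R h k))
    \<le> (1 + L2normH P (phi A h \<beta>)) * (norm (\<Delta> + \<epsilon> *\<^sub>R d) + L2norm P (\<lambda>z. enn2real (RN_deriv P Q z) - 1 - \<epsilon> * s z))"
proof -
  define r where "r = (\<lambda>z. enn2real (RN_deriv P Q z) - 1 - \<epsilon> * s z)"
  define R where "R = (\<integral>z. r z *\<^sub>R phi A h \<beta> z \<partial>P)"
  define V where "V = \<Delta> + (\<integral>z. phi A h \<beta> z \<partial>Q) - (\<Sum>k. ((1 - \<beta> k) * inner \<Delta> (h k)) *\<^sub>R h k)"
  have "inner (V - R) (h j) = \<beta> j * inner (\<Delta> + \<epsilon> *\<^sub>R d) (h j)" for j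
  proof -
    have "inner (\<Sum>k. ((1 - \<beta> k) * inner \<Delta> (h k)) *\<^sub>R h k) (h j) = (1 - \<beta> j) * inner \<Delta> (h j)"
      using \<beta>01 by (intro inner_padded_onb_series[OF basis]) auto
    moreover have "inner ((\<integral>z. phi A h \<beta> z \<partial>Q) - R) (h j) = \<epsilon> * \<beta> j * inner d (h j)"
      unfolding R_def r_def by (rule inner_debiasing_term)
    moreover have "inner (V - R) (h j) = inner \<Delta> (h j) + inner ((\<integral>z. phi A h \<beta> z \<partial>Q) - R) (h j)
        - inner (\<Sum>k. ((1 - \<beta> k) * inner \<Delta> (h k)) *\<^sub>R h k) (h j)"
      unfolding V_def inner_diff_left inner_add_left by linarith
    ultimately show ?thesis by (simp add: inner_add_left algebra_simps)
  qed
  then have "norm (V - R) \<le> norm (\<Delta> + \<epsilon> *\<^sub>R d)"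
    using \<beta>01 by (intro padded_onb_norm_le_by_coefficients[OF basis]) (simp add: abs_mult mult_left_le_one_le)
  moreover have "norm R \<le> L2norm P r * L2normH P (phi A h \<beta>)"
    unfolding R_def r_def by (rule L2_cauchy_schwarz_scaleR(2)[OF remainder phi_measurable phi_norm_L2])
  moreover have "norm V \<le> norm (V - R) + norm R"
    using norm_triangle_ineq[of "V - R" R] by simp
  moreover have "0 \<le> L2norm P r + L2normH P (phi A h \<beta>) * norm (\<Delta> + \<epsilon> *\<^sub>R d)"
    by (simp add: L2normH_def L2norm_nonneg)
  ultimately show ?thesis
    unfolding V_def r_def[symmetric] by (simp add: algebra_simps)
qed

end

end

theorem lemmaS7:
  fixes lam :: "'z::polish_space measure" and Ps :: "'z measure set"
    and \<nu> :: "'z measure \<Rightarrow> 'h::{real_inner,complete_space,second_countable_topology}" and h :: "nat \<Rightarrow> 'h"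
    and P :: "'z measure" and s :: "'z \<Rightarrow> real" and \<delta> :: real
    and Pe :: "real \<Rightarrow> 'z measure"
    and D :: "('z \<Rightarrow> real) \<Rightarrow> 'h" and A :: "'h \<Rightarrow> 'z \<Rightarrow> real"
  assumes model: "dominated_model lam Ps"
    and basis: "padded_onb h"
    and P: "P \<in> Ps"
    and s: "s \<in> tangent_set lam Ps P"
    and sub: "submodel lam Ps P s \<delta> Pe"
    and ac: "\<forall>\<epsilon>\<in>{0..<\<delta>}. absolutely_continuous P (Pe \<epsilon>)"
    and L2fin: "\<forall>\<epsilon>\<in>{0..<\<delta>}. integrable P (\<lambda>z. (enn2real (RN_deriv P (Pe \<epsilon>) z) - 1 - \<epsilon> * s z)\<^sup>2)"
    and rate: "((\<lambda>\<epsilon>. L2norm P (\<lambda>z. enn2real (RN_deriv P (Pe \<epsilon>) z) - 1 - \<epsilon> * s z) / \<epsilon>)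
                 \<longlongrightarrow> 0) (at_right 0)"
    and deriv: "pathwise_deriv lam Ps \<nu> P D"
    and adj: "adjoint_of lam Ps P D A"
  shows "\<exists>g::real \<Rightarrow> real. (\<forall>\<epsilon>\<in>{0<..<\<delta>}. 0 \<le> g \<epsilon>) \<and>
           ((\<lambda>\<epsilon>. g \<epsilon> / \<epsilon>) \<longlongrightarrow> 0) (at_right 0) \<and>
           (\<forall>\<beta>::nat \<Rightarrow> real. (\<forall>k. 0 \<le> \<beta> k \<and> \<beta> k \<le> 1) \<and> summable (\<lambda>k. (\<beta> k)\<^sup>2) \<longrightarrow>
              (\<forall>\<epsilon>\<in>{0<..<\<delta>}.
                 norm (\<nu> P - \<nu> (Pe \<epsilon>) + (\<integral>z. phi A h \<beta> z \<partial>(Pe \<epsilon>))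
                       - (\<Sum>k. ((1 - \<beta> k) * inner (\<nu> P - \<nu> (Pe \<epsilon>)) (h k)) *\<^sub>R h k))
                 \<le> (1 + L2normH P (phi A h \<beta>)) * g \<epsilon>))"
proof -
  interpret P: prob_space P using dominated_modelD[OF model P] by simp
  have s_L2: "L2 P s" using s by (simp add: tangent_set_def)
  note A = adjoint_ofD[OF model P adj tangent_set_subset_tangent_space[THEN subsetD, OF s]]
  obtain K where A_bound: "\<And>k. (\<integral>z. (A (h k) z)\<^sup>2 \<partial>P) \<le> K"
    using adjoint_bounded_on_padded_onb[OF deriv adj basis] by blast
  define rem where "rem \<epsilon> = (\<lambda>z. enn2real (RN_deriv P (Pe \<epsilon>) z) - 1 - \<epsilon> * s z)" for \<epsilon>
  define g where "g \<epsilon> = norm (\<nu> P - \<nu> (Pe \<epsilon>) + \<epsilon> *\<^sub>R D s) + L2norm P (rem \<epsilon>)" for \<epsilon>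
  have g_rate: "((\<lambda>\<epsilon>. g \<epsilon> / \<epsilon>) \<longlongrightarrow> 0) (at_right 0)"
    using tendsto_add[OF pathwise_deriv_along_submodel[OF deriv s sub] rate]
    by (simp add: g_def rem_def add_divide_distrib)
  have bound: "norm (\<nu> P - \<nu> (Pe \<epsilon>) + (\<integral>z. phi A h \<beta> z \<partial>Pe \<epsilon>)
      - (\<Sum>k. ((1 - \<beta> k) * inner (\<nu> P - \<nu> (Pe \<epsilon>)) (h k)) *\<^sub>R h k))
      \<le> (1 + L2normH P (phi A h \<beta>)) * g \<epsilon>"
    if \<beta>01: "\<And>k. 0 \<le> \<beta> k \<and> \<beta> k \<le> 1" and \<beta>: "summable (\<lambda>k. (\<beta> k)\<^sup>2)" and \<epsilon>: "\<epsilon> \<in> {0<..<\<delta>}" for \<beta> \<epsilon>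
  proof -
    have "Pe \<epsilon> \<in> Ps" using sub \<epsilon> by (simp add: submodel_def)
    note Q = dominated_modelD[OF model this]
    have [measurable]: "s \<in> borel_measurable P" using s_L2 by (simp add: L2_def)
    have "L2 P (rem \<epsilon>)" unfolding L2_def rem_def using L2fin \<epsilon> by simp
    moreover have "sets (Pe \<epsilon>) = sets P" using Q(4) dominated_modelD(4)[OF model P] by simp
    ultimately show ?thesis
      unfolding g_def rem_def
      using debiased_remainder_bound[OF basis A(1) A_bound \<beta> P.finite_measure_axioms
          prob_space.finite_measure[OF Q(3)] _ _ A(2) A(3) \<beta>01 s_L2] ac \<epsilon>
      by simp
  qed
  show ?thesis
  proof (intro exI[of _ g] conjI allI impI ballI)
    show "0 \<le> g \<epsilon>" for \<epsilon> by (simp add: g_def L2norm_nonneg)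
  qed (simp_all add: g_rate bound)
qed

end
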